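(* Let $\varepsilon>0$, $\varepsilon_\Lambda>0$, $\varphi(s)=\exp((s-0.5)/\varepsilon)$ and $w_k(x)=\varphi(s(\sigma(x)))/\sum_{y\in N_k}\varphi(s(\sigma(y)))$ for $x\in N_k$. For each $k$ let $P_k=\{p: N_k\cap S_p\neq\emptyset\}$, $\lambda_k=\max_{p\in P_k}s(p)$, $\Lambda(\lambda)=\exp((\lambda-0.5)/\varepsilon_\Lambda)$, $\rho_k=\Lambda(\lambda_k)|N_k|/\sum_j\Lambda(\lambda_j)|N_j|$, $M_{\mathrm{total}}=\sum_kM_k$, $\tilde{M}_k=M_{\mathrm{total}}\rho_k$, and define the Soft IWMR attribution $\tilde{A}^{\mathrm{IWMR}}(x)=\tilde{M}_{\nu(x)}\,w_{\nu(x)}(x)$. Then: (D1-G) $\sum_{x\in N_k}\tilde{A}^{\mathrm{IWMR}}(x)=\tilde{M}_k$ for all $k$; (D2) for all $k$ with $\tilde{M}_k\ge0$ and $x,y\in N_k$, $s(\sigma(x))\ge s(\sigma(y))$ implies $\tilde{A}^{\mathrm{IWMR}}(x)\ge\tilde{A}^{\mathrm{IWMR}}(y)$; (D3) the potential satisfies $\varphi(s+\Delta)/\varphi(s)=\exp(\Delta/\varepsilon)$ independent of $s$; (D4$'$) $\tilde{A}^{\mathrm{IWMR}}(x)$ is determined by $\tilde{M}_{\nu(x)}$ and the segment scores within $N_{\nu(x)}$. Moreover, Soft IWMR violates neighbourhood completeness $\sum_{x\in N_k}\tilde{A}^{\mathrm{IWMR}}(x)=M_k$ whenever $\tilde{M}_k\neq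 M_k$, which occurs precisely when the neighbourhood importances $\lambda_k$ are non-uniform.
   Context: $\Omega=\{0,\dots,H-1\}\times\{0,\dots,W-1\}$ is the pixel lattice. $\mathcal{N}=\{N_0,\dots,N_{K-1}\}$ is a partition of $\Omega$ into disjoint neighbourhoods with index function $\nu$ ($\nu(x)=k$ iff $x\in N_k$); $\mathcal{S}=\{S_0,\dots,S_{P-1}\}$ is a partition of $\Omega$ into segments with index function $\sigma$. $A\colon\Omega\to\mathbb{R}$ is a coarse attribution with neighbourhood masses $M_k=\sum_{x\in N_k}A(x)$; $s\colon\{0,\dots,P-1\}\to[0,1]$ are segment scores.
   Formalization: The precisely-when clause is replaced by: $\rho_k\neq|N_k|/|\Omega|$ for some k if and only if the $\lambda_k$ are not all equal, in place of $\tilde{M}_k\neq M_k$ occurring precisely when the $\lambda_k$ are non-uniform. The statement above fails without it. *)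

theory Defs
  imports Complex_Main
begin

type_synonym pixel = "nat \<times> nat"

definition lattice :: "nat \<Rightarrow> nat \<Rightarrow> pixel set" where
  "lattice H W = {0..<H} \<times> {0..<W}"

definition block :: "pixel set \<Rightarrow> (pixel \<Rightarrow> nat) \<Rightarrow> nat \<Rightarrow> pixel set" where
  "block \<Omega> \<nu> k = {x \<in> \<Omega>. \<nu> x = k}"

definition is_partition :: "pixel set \<Rightarrow> nat \<Rightarrow> (pixel \<Rightarrow> nat) \<Rightarrow> bool" where
  "is_partition \<Omega> n f \<longleftrightarrow> (\<forall>x\<in>\<Omega>. f x < n) \<and> (\<forall>k<n. block \<Omega> f k \<noteq> {})"

definition pot :: "real \<Rightarrow> real \<Rightarrow> real" where
  "pot \<epsilon> t = exp ((t - 0.5) / \<epsilon>)"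

definition wgt :: "real \<Rightarrow> pixel set \<Rightarrow> (pixel \<Rightarrow> nat) \<Rightarrow> (pixel \<Rightarrow> nat) \<Rightarrow> (nat \<Rightarrow> real)
    \<Rightarrow> pixel \<Rightarrow> real" where
  "wgt \<epsilon> \<Omega> \<nu> \<sigma> s x =
     pot \<epsilon> (s (\<sigma> x)) / (\<Sum>y\<in>block \<Omega> \<nu> (\<nu> x). pot \<epsilon> (s (\<sigma> y)))"

definition segs_in :: "pixel set \<Rightarrow> (pixel \<Rightarrow> nat) \<Rightarrow> (pixel \<Rightarrow> nat) \<Rightarrow> nat \<Rightarrow> nat set" where
  "segs_in \<Omega> \<nu> \<sigma> k = {p. block \<Omega> \<nu> k \<inter> block \<Omega> \<sigma> p \<noteq> {}}"

definition lam :: "pixel set \<Rightarrow> (pixel \<Rightarrow> nat) \<Rightarrow> (pixel \<Rightarrow> nat) \<Rightarrow> (nat \<Rightarrow> real) \<Rightarrow> nat \<Rightarrow> real" where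
  "lam \<Omega> \<nu> \<sigma> s k = Max (s ` segs_in \<Omega> \<nu> \<sigma> k)"

definition Lam :: "real \<Rightarrow> real \<Rightarrow> real" where
  "Lam \<epsilon>\<Lambda> l = exp ((l - 0.5) / \<epsilon>\<Lambda>)"

definition rho :: "real \<Rightarrow> pixel set \<Rightarrow> nat \<Rightarrow> (pixel \<Rightarrow> nat) \<Rightarrow> (pixel \<Rightarrow> nat) \<Rightarrow> (nat \<Rightarrow> real)
    \<Rightarrow> nat \<Rightarrow> real" where
  "rho \<epsilon>\<Lambda> \<Omega> K \<nu> \<sigma> s k =
     Lam \<epsilon>\<Lambda> (lam \<Omega> \<nu> \<sigma> s k) * real (card (block \<Omega> \<nu> k)) /
     (\<Sum>j<K. Lam \<epsilon>\<Lambda> (lam \<Omega> \<nu> \<sigma> s j) * real (card (block \<Omega> \<nu> j)))"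

definition mass :: "pixel set \<Rightarrow> (pixel \<Rightarrow> nat) \<Rightarrow> (pixel \<Rightarrow> real) \<Rightarrow> nat \<Rightarrow> real" where
  "mass \<Omega> \<nu> A k = (\<Sum>x\<in>block \<Omega> \<nu> k. A x)"

definition Mtotal :: "pixel set \<Rightarrow> nat \<Rightarrow> (pixel \<Rightarrow> nat) \<Rightarrow> (pixel \<Rightarrow> real) \<Rightarrow> real" where
  "Mtotal \<Omega> K \<nu> A = (\<Sum>k<K. mass \<Omega> \<nu> A k)"

definition Mtil :: "real \<Rightarrow> pixel set \<Rightarrow> nat \<Rightarrow> (pixel \<Rightarrow> nat) \<Rightarrow> (pixel \<Rightarrow> nat) \<Rightarrow> (nat \<Rightarrow> real)
    \<Rightarrow> (pixel \<Rightarrow> real) \<Rightarrow> nat \<Rightarrow> real" where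
  "Mtil \<epsilon>\<Lambda> \<Omega> K \<nu> \<sigma> s A k = Mtotal \<Omega> K \<nu> A * rho \<epsilon>\<Lambda> \<Omega> K \<nu> \<sigma> s k"

definition soft_iwmr :: "real \<Rightarrow> real \<Rightarrow> pixel set \<Rightarrow> nat \<Rightarrow> (pixel \<Rightarrow> nat) \<Rightarrow> (pixel \<Rightarrow> nat)
    \<Rightarrow> (nat \<Rightarrow> real) \<Rightarrow> (pixel \<Rightarrow> real) \<Rightarrow> pixel \<Rightarrow> real" where
  "soft_iwmr \<epsilon> \<epsilon>\<Lambda> \<Omega> K \<nu> \<sigma> s A x =
     Mtil \<epsilon>\<Lambda> \<Omega> K \<nu> \<sigma> s A (\<nu> x) * wgt \<epsilon> \<Omega> \<nu> \<sigma> s x"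

end

theory Submission
  imports Defs
begin

text \<open>On each neighbourhood the Soft IWMR attribution is the redistributed mass times a softmax
  of the segment scores: the weights sum to one, they are monotone because the exponential
  potential is increasing, and they only see the scores inside the neighbourhood. The
  redistribution share \<open>\<rho>\<^sub>k\<close> is an area share reweighted by \<open>\<Lambda>(\<lambda>\<^sub>k)\<close>, so it coincides with the
  plain area share exactly when these weights are all equal, i.e. when \<open>\<lambda>\<close> is uniform.\<close>

lemma finite_lattice: "finite (lattice H W)"
  by (simp add: lattice_def)

lemma finite_block: "finite \<Omega> \<Longrightarrow> finite (block \<Omega> \<nu> k)"
  by (simp add: block_def)

lemma block_of_point: "x \<in> \<Omega> \<Longrightarrow> x \<in> block \<Omega> \<nu> (\<nu> x)"
  by (simp add: block_def)

lemma sum_card_blocks: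
  assumes "finite \<Omega>" "\<forall>x\<in>\<Omega>. \<nu> x < K"
  shows "(\<Sum>j<K. card (block \<Omega> \<nu> j)) = card \<Omega>"
proof -
  have "\<Omega> = (\<Union>j<K. block \<Omega> \<nu> j)"
    using assms(2) by (auto simp: block_def)
  moreover have "card (\<Union>j<K. block \<Omega> \<nu> j) = (\<Sum>j<K. card (block \<Omega> \<nu> j))"
    by (rule card_UN_disjoint) (auto simp: assms(1) block_def)
  ultimately show ?thesis by simp
qed

lemma pot_pos: "pot \<epsilon> t > 0"
  by (simp add: pot_def)

lemma pot_le_iff: "\<epsilon> > 0 \<Longrightarrow> pot \<epsilon> a \<le> pot \<epsilon> b \<longleftrightarrow> a \<le> b"
  by (simp add: pot_def divide_le_cancel)

lemma pot_eq_iff: "\<epsilon> > 0 \<Longrightarrow> pot \<epsilon> a = pot \<epsilon> b \<longleftrightarrow> a = b"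
  by (simp add: pot_def)

lemma pot_shift_ratio: "pot \<epsilon> (t + \<Delta>) / pot \<epsilon> t = exp (\<Delta> / \<epsilon>)"
proof -
  have "(t + \<Delta> - 0.5) / \<epsilon> = (t - 0.5) / \<epsilon> + \<Delta> / \<epsilon>"
    by (simp add: add_divide_distrib[symmetric] algebra_simps)
  then show ?thesis
    by (simp add: pot_def exp_add)
qed

lemma Lam_eq_pot: "Lam \<epsilon> = pot \<epsilon>"
  by (simp add: fun_eq_iff Lam_def pot_def)

lemma sum_normalized_weights:
  fixes f :: "'a \<Rightarrow> real"
  assumes "finite B" "B \<noteq> {}" "\<forall>x\<in>B. f x > 0"
  shows "(\<Sum>x\<in>B. c * (f x / (\<Sum>y\<in>B. f y))) = c"
proof -
  have "(\<Sum>y\<in>B. f y) > 0"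
    using assms by (intro sum_pos) auto
  then show ?thesis
    by (simp add: sum_distrib_left[symmetric] sum_divide_distrib[symmetric])
qed

lemma weighted_share_eq_share_iff:
  fixes L n :: "'a \<Rightarrow> real"
  assumes "finite I" and L_pos: "\<forall>j\<in>I. L j > 0" and n_pos: "\<forall>j\<in>I. n j > 0"
  shows "(\<forall>k\<in>I. L k * n k / (\<Sum>j\<in>I. L j * n j) = n k / (\<Sum>j\<in>I. n j))
           \<longleftrightarrow> (\<forall>j\<in>I. \<forall>k\<in>I. L j = L k)"
proof (cases "I = {}")
  case False
  have n_sum_pos: "(\<Sum>j\<in>I. n j) > 0"
    using assms False by (intro sum_pos) auto
  have Ln_sum_pos: "(\<Sum>j\<in>I. L j * n j) > 0"
    using assms False by (intro sum_pos) auto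
  show ?thesis
  proof
    assume shares: "\<forall>k\<in>I. L k * n k / (\<Sum>j\<in>I. L j * n j) = n k / (\<Sum>j\<in>I. n j)"
    have "L k = (\<Sum>j\<in>I. L j * n j) / (\<Sum>j\<in>I. n j)" if "k \<in> I" for k
    proof -
      have "L k * n k / (\<Sum>j\<in>I. L j * n j) = n k / (\<Sum>j\<in>I. n j)" "n k > 0"
        using shares n_pos that by blast+
      then show ?thesis
        using n_sum_pos Ln_sum_pos by (simp add: field_simps)
    qed
    then show "\<forall>j\<in>I. \<forall>k\<in>I. L j = L k"
      by simp
  next
    assume const: "\<forall>j\<in>I. \<forall>k\<in>I. L j = L k"
    have "(\<Sum>j\<in>I. L j * n j) = L k * (\<Sum>j\<in>I. n j)" if "k \<in> I" for k
      unfolding sum_distrib_left using const that by (intro sum.cong refl) metis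
    then show "\<forall>k\<in>I. L k * n k / (\<Sum>j\<in>I. L j * n j) = n k / (\<Sum>j\<in>I. n j)"
      using L_pos by fastforce
  qed
qed simp

lemma soft_iwmr_block:
  assumes "x \<in> block \<Omega> \<nu> k"
  shows "soft_iwmr \<epsilon> \<epsilon>\<Lambda> \<Omega> K \<nu> \<sigma> s A x =
    Mtil \<epsilon>\<Lambda> \<Omega> K \<nu> \<sigma> s A k * (pot \<epsilon> (s (\<sigma> x)) / (\<Sum>y\<in>block \<Omega> \<nu> k. pot \<epsilon> (s (\<sigma> y))))"
  using assms by (simp add: soft_iwmr_def wgt_def block_def)

lemma sum_soft_iwmr_block:
  assumes "finite \<Omega>" "block \<Omega> \<nu> k \<noteq> {}"
  shows "(\<Sum>x\<in>block \<Omega> \<nu> k. soft_iwmr \<epsilon> \<epsilon>\<Lambda> \<Omega> K \<nu> \<sigma> s A x) = Mtil \<epsilon>\<Lambda> \<Omega> K \<nu> \<sigma> s A k"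
  using sum_normalized_weights[OF finite_block[OF assms(1)] assms(2)]
  by (simp add: soft_iwmr_block pot_pos)

lemma soft_iwmr_mono:
  assumes "\<epsilon> > 0" "Mtil \<epsilon>\<Lambda> \<Omega> K \<nu> \<sigma> s A k \<ge> 0"
    and "x \<in> block \<Omega> \<nu> k" "y \<in> block \<Omega> \<nu> k" "s (\<sigma> y) \<le> s (\<sigma> x)"
  shows "soft_iwmr \<epsilon> \<epsilon>\<Lambda> \<Omega> K \<nu> \<sigma> s A y \<le> soft_iwmr \<epsilon> \<epsilon>\<Lambda> \<Omega> K \<nu> \<sigma> s A x"
proof -
  have "pot \<epsilon> (s (\<sigma> y)) \<le> pot \<epsilon> (s (\<sigma> x))"
    using assms(1,5) by (simp add: pot_le_iff)
  moreover have "(\<Sum>z\<in>block \<Omega> \<nu> k. pot \<epsilon> (s (\<sigma> z))) \<ge> 0"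
    by (simp add: sum_nonneg less_imp_le pot_pos)
  ultimately show ?thesis
    using assms(2-4) by (simp add: soft_iwmr_block mult_left_mono divide_right_mono)
qed

lemma soft_iwmr_local:
  assumes "x \<in> \<Omega>"
    and same_block: "block \<Omega> \<nu>' (\<nu>' x) = block \<Omega> \<nu> (\<nu> x)"
    and same_mass: "Mtil \<epsilon>\<Lambda>' \<Omega> K' \<nu>' \<sigma>' s' A' (\<nu>' x) = Mtil \<epsilon>\<Lambda> \<Omega> K \<nu> \<sigma> s A (\<nu> x)"
    and same_scores: "\<forall>y\<in>block \<Omega> \<nu> (\<nu> x). s' (\<sigma>' y) = s (\<sigma> y)"
  shows "soft_iwmr \<epsilon> \<epsilon>\<Lambda>' \<Omega> K' \<nu>' \<sigma>' s' A' x = soft_iwmr \<epsilon> \<epsilon>\<Lambda> \<Omega> K \<nu> \<sigma> s A x"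
proof -
  have x: "x \<in> block \<Omega> \<nu> (\<nu> x)" "x \<in> block \<Omega> \<nu>' (\<nu>' x)"
    using assms(1) by (simp_all add: block_of_point)
  have "soft_iwmr \<epsilon> \<epsilon>\<Lambda>' \<Omega> K' \<nu>' \<sigma>' s' A' x = Mtil \<epsilon>\<Lambda>' \<Omega> K' \<nu>' \<sigma>' s' A' (\<nu>' x)
      * (pot \<epsilon> (s' (\<sigma>' x)) / (\<Sum>y\<in>block \<Omega> \<nu>' (\<nu>' x). pot \<epsilon> (s' (\<sigma>' y))))"
    using x(2) by (rule soft_iwmr_block)
  also have "\<dots> = Mtil \<epsilon>\<Lambda> \<Omega> K \<nu> \<sigma> s A (\<nu> x)
      * (pot \<epsilon> (s (\<sigma> x)) / (\<Sum>y\<in>block \<Omega> \<nu> (\<nu> x). pot \<epsilon> (s (\<sigma> y))))"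
    using x(1) same_block same_mass same_scores by simp
  also have "\<dots> = soft_iwmr \<epsilon> \<epsilon>\<Lambda> \<Omega> K \<nu> \<sigma> s A x"
    using x(1) by (rule soft_iwmr_block[symmetric])
  finally show ?thesis .
qed

lemma rho_eq_area_share_iff:
  assumes "finite \<Omega>" "is_partition \<Omega> K \<nu>" "\<epsilon>\<Lambda> > 0"
  shows "(\<forall>k<K. rho \<epsilon>\<Lambda> \<Omega> K \<nu> \<sigma> s k = real (card (block \<Omega> \<nu> k)) / real (card \<Omega>))
           \<longleftrightarrow> (\<forall>j<K. \<forall>k<K. lam \<Omega> \<nu> \<sigma> s j = lam \<Omega> \<nu> \<sigma> s k)"
proof -
  let ?L = "\<lambda>j. pot \<epsilon>\<Lambda> (lam \<Omega> \<nu> \<sigma> s j)" and ?n = "\<lambda>j. real (card (block \<Omega> \<nu> j))"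
  have card_\<Omega>: "real (card \<Omega>) = (\<Sum>j<K. ?n j)"
    using assms(1,2) sum_card_blocks[of \<Omega> \<nu> K] unfolding is_partition_def
    by (metis of_nat_sum)
  have "\<forall>j\<in>{..<K}. ?n j > 0"
    using assms(1,2) by (simp add: is_partition_def card_gt_0_iff finite_block)
  then have "(\<forall>k\<in>{..<K}. ?L k * ?n k / (\<Sum>j<K. ?L j * ?n j) = ?n k / (\<Sum>j<K. ?n j))
               \<longleftrightarrow> (\<forall>j\<in>{..<K}. \<forall>k\<in>{..<K}. ?L j = ?L k)"
    by (intro weighted_share_eq_share_iff) (simp_all add: pot_pos)
  then show ?thesis
    using assms(3) unfolding Ball_def lessThan_iff
    by (simp add: rho_def Lam_eq_pot card_\<Omega> pot_eq_iff)
qed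

theorem theorem6:
  fixes H W K P :: nat and \<nu> \<sigma> :: "pixel \<Rightarrow> nat" and s :: "nat \<Rightarrow> real"
    and A :: "pixel \<Rightarrow> real" and \<epsilon> \<epsilon>\<Lambda> :: real
  defines "\<Omega> \<equiv> lattice H W"
  defines "At \<equiv> soft_iwmr \<epsilon> \<epsilon>\<Lambda> \<Omega> K \<nu> \<sigma> s A"
  defines "Mt \<equiv> Mtil \<epsilon>\<Lambda> \<Omega> K \<nu> \<sigma> s A"
  assumes eps: "\<epsilon> > 0" and epsL: "\<epsilon>\<Lambda> > 0"
    and nbhds: "is_partition \<Omega> K \<nu>"
    and segments: "is_partition \<Omega> P \<sigma>"
    and scores: "\<forall>p<P. 0 \<le> s p \<and> s p \<le> 1"
  shows
    \<comment> \<open>(D1-G)\<close>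
    "(\<forall>k<K. (\<Sum>x\<in>block \<Omega> \<nu> k. At x) = Mt k)
     \<comment> \<open>(D2)\<close>
     \<and> (\<forall>k<K. Mt k \<ge> 0 \<longrightarrow> (\<forall>x\<in>block \<Omega> \<nu> k. \<forall>y\<in>block \<Omega> \<nu> k.
          s (\<sigma> x) \<ge> s (\<sigma> y) \<longrightarrow> At x \<ge> At y))
     \<comment> \<open>(D3)\<close>
     \<and> (\<forall>t \<Delta>. pot \<epsilon> (t + \<Delta>) / pot \<epsilon> t = exp (\<Delta> / \<epsilon>))
     \<comment> \<open>(D4'): any other configuration with the same neighbourhood of x, the same
          redistributed mass there, and the same segment scores on it gives the same value\<close>
     \<and> (\<forall>x\<in>\<Omega>. \<forall>K' \<nu>' \<sigma>' s' A' \<epsilon>\<Lambda>'.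
          block \<Omega> \<nu>' (\<nu>' x) = block \<Omega> \<nu> (\<nu> x)
          \<and> Mtil \<epsilon>\<Lambda>' \<Omega> K' \<nu>' \<sigma>' s' A' (\<nu>' x) = Mt (\<nu> x)
          \<and> (\<forall>y\<in>block \<Omega> \<nu> (\<nu> x). s' (\<sigma>' y) = s (\<sigma> y))
          \<longrightarrow> soft_iwmr \<epsilon> \<epsilon>\<Lambda>' \<Omega> K' \<nu>' \<sigma>' s' A' x = At x)
     \<comment> \<open>violation of neighbourhood completeness\<close>
     \<and> (\<forall>k<K. Mt k \<noteq> mass \<Omega> \<nu> A k \<longrightarrow> (\<Sum>x\<in>block \<Omega> \<nu> k. At x) \<noteq> mass \<Omega> \<nu> A k)
     \<comment> \<open>the redistribution departs from area-proportional shares iff lambda is non-uniform\<close>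
     \<and> ((\<exists>k<K. rho \<epsilon>\<Lambda> \<Omega> K \<nu> \<sigma> s k \<noteq> real (card (block \<Omega> \<nu> k)) / real (card \<Omega>))
        \<longleftrightarrow> (\<exists>j<K. \<exists>k<K. lam \<Omega> \<nu> \<sigma> s j \<noteq> lam \<Omega> \<nu> \<sigma> s k))"
proof -
  have fin: "finite \<Omega>"
    by (simp add: \<Omega>_def finite_lattice)
  have D1: "\<forall>k<K. (\<Sum>x\<in>block \<Omega> \<nu> k. At x) = Mt k"
    using nbhds fin by (simp add: is_partition_def sum_soft_iwmr_block At_def Mt_def)
  have "\<forall>k<K. Mt k \<ge> 0 \<longrightarrow> (\<forall>x\<in>block \<Omega> \<nu> k. \<forall>y\<in>block \<Omega> \<nu> k.
          s (\<sigma> x) \<ge> s (\<sigma> y) \<longrightarrow> At x \<ge> At y)"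
    using soft_iwmr_mono[OF eps] unfolding At_def Mt_def by blast
  moreover have "\<forall>x\<in>\<Omega>. \<forall>K' \<nu>' \<sigma>' s' A' \<epsilon>\<Lambda>'.
          block \<Omega> \<nu>' (\<nu>' x) = block \<Omega> \<nu> (\<nu> x)
          \<and> Mtil \<epsilon>\<Lambda>' \<Omega> K' \<nu>' \<sigma>' s' A' (\<nu>' x) = Mt (\<nu> x)
          \<and> (\<forall>y\<in>block \<Omega> \<nu> (\<nu> x). s' (\<sigma>' y) = s (\<sigma> y))
          \<longrightarrow> soft_iwmr \<epsilon> \<epsilon>\<Lambda>' \<Omega> K' \<nu>' \<sigma>' s' A' x = At x"
    using soft_iwmr_local unfolding At_def Mt_def by blast
  moreover have "\<forall>k<K. Mt k \<noteq> mass \<Omega> \<nu> A k \<longrightarrow> (\<Sum>x\<in>block \<Omega> \<nu> k. At x) \<noteq> mass \<Omega> \<nu> A k"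
    using D1 by simp
  moreover have "(\<exists>k<K. rho \<epsilon>\<Lambda> \<Omega> K \<nu> \<sigma> s k \<noteq> real (card (block \<Omega> \<nu> k)) / real (card \<Omega>))
        \<longleftrightarrow> (\<exists>j<K. \<exists>k<K. lam \<Omega> \<nu> \<sigma> s j \<noteq> lam \<Omega> \<nu> \<sigma> s k)"
    using rho_eq_area_share_iff[OF fin nbhds epsL, of \<sigma> s] by blast
  ultimately show ?thesis
    using D1 pot_shift_ratio by blast
qed

end
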